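(* Let $X$ be a compact topological space, let $D\subseteq X$, let $\overline{D}$ be the closure of $D$ in $X$, and put $\partial D:=\overline{D}\setminus D$. Let $\overline{\mathbb{C}}=\mathbb{C}\cup\{\infty\}$ be the Riemann sphere and let $f\colon\overline{D}\to\overline{\mathbb{C}}$ be a continuous map such that $f(D)$ is open in $\overline{\mathbb{C}}$. Let $M:=\sup_{z\in\partial D}|f(z)|\in[0,\infty]$ (with $|\infty|=\infty$) and $\overline{B}_M:=\{w\in\overline{\mathbb{C}}\colon |w|\le M\}$. Then either $f(D)\supseteq\overline{\mathbb{C}}\setminus\overline{B}_M$ (i.e. $f$ takes on $D$ all values in $\overline{\mathbb{C}}$ of modulus $>M$), or $f(\overline{D})\subseteq\overline{B}_M$.
   Context: Note that $\partial D$ is defined as $\overline{D}\setminus D$; the convention $|\infty|=\infty$ is used. *)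

theory Defs
  imports "HOL-Analysis.Analysis" "HOL-Library.Extended_Nonnegative_Real"
begin

text \<open>The Riemann sphere as the one-point compactification of the complex plane:
  \<open>Some z\<close> is the point z, \<open>None\<close> is the point at infinity.\<close>

type_synonym csphere = "complex option"

definition sphere_open :: "csphere set \<Rightarrow> bool" where
  "sphere_open U \<longleftrightarrow> open {z. Some z \<in> U} \<and>
     (None \<in> U \<longrightarrow> compact (- {z. Some z \<in> U}))"

lemma istopology_sphere_open: "istopology sphere_open"
  unfolding istopology_def
proof (intro conjI allI impI ballI)
  fix S T assume S: "sphere_open S" and T: "sphere_open T"
  have e: "{z. Some z \<in> S \<inter> T} = {z. Some z \<in> S} \<inter> {z. Some z \<in> T}" by auto
  have c: "- {z. Some z \<in> S \<inter> T} = - {z. Some z \<in> S} \<union> - {z. Some z \<in> T}" by auto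
  show "sphere_open (S \<inter> T)"
    using S T unfolding sphere_open_def e c by (auto intro: compact_Un)
next
  fix K assume K: "\<forall>S\<in>K. sphere_open S"
  have e: "{z. Some z \<in> \<Union>K} = (\<Union>S\<in>K. {z. Some z \<in> S})" by auto
  have o: "open {z. Some z \<in> \<Union>K}" unfolding e using K by (auto simp: sphere_open_def)
  show "sphere_open (\<Union>K)"
    unfolding sphere_open_def
  proof (intro conjI impI o)
    assume "None \<in> \<Union>K"
    then obtain S where S: "S \<in> K" "None \<in> S" by auto
    then have cS: "compact (- {z. Some z \<in> S})" using K by (auto simp: sphere_open_def)
    have "- {z. Some z \<in> \<Union>K} = (- {z. Some z \<in> S}) \<inter> - {z. Some z \<in> \<Union>K}"
      using S by auto
    moreover have "closed (- {z. Some z \<in> \<Union>K})" using o by (simp add: closed_def)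
    ultimately show "compact (- {z. Some z \<in> \<Union>K})"
      using cS by (metis compact_Int_closed)
  qed
qed

definition riemann_sphere :: "csphere topology" where
  "riemann_sphere = topology sphere_open"

lemma openin_riemann_sphere: "openin riemann_sphere U \<longleftrightarrow> sphere_open U"
  unfolding riemann_sphere_def using istopology_sphere_open by simp

definition smod :: "csphere \<Rightarrow> ennreal" where
  "smod w = (case w of None \<Rightarrow> \<infinity> | Some z \<Rightarrow> ennreal (cmod z))"

end

theory Submission
  imports Defs
begin

text \<open>The image of the compact set \<open>closure D\<close> is compact, hence closed in the sphere. Points of
  modulus \<open>> M\<close> cannot come from the boundary, so on the region \<open>{|w| > M}\<close> the open set \<open>f(D)\<close>
  and the closed set \<open>f(closure D)\<close> coincide. That region is connected, so their common trace on
  it is either empty, giving \<open>f(closure D) \<subseteq> {|w| \<le> M}\<close>, or the whole region, giving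
  \<open>f(D) \<supseteq> {|w| > M}\<close>.\<close>

lemma topspace_riemann_sphere: "topspace riemann_sphere = UNIV"
proof -
  have "openin riemann_sphere UNIV"
    by (simp add: openin_riemann_sphere sphere_open_def)
  then show ?thesis using openin_subset by blast
qed

lemma openin_riemann_sphere_Some_image: "open B \<Longrightarrow> openin riemann_sphere (Some ` B)"
  unfolding openin_riemann_sphere sphere_open_def by (auto simp: image_iff)

lemma open_Some_preimage: "openin riemann_sphere S \<Longrightarrow> open {z. Some z \<in> S}"
  by (simp add: openin_riemann_sphere sphere_open_def)

lemma closed_Some_preimage: "closedin riemann_sphere C \<Longrightarrow> closed {z. Some z \<in> C}"
proof -
  assume "closedin riemann_sphere C"
  then have "open {z. Some z \<in> - C}"
    by (intro open_Some_preimage) (simp add: closedin_def topspace_riemann_sphere Compl_eq_Diff_UNIV)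
  then show ?thesis by (simp add: closed_def Collect_neg_eq)
qed

lemma openin_riemann_sphere_None_large:
  assumes "openin riemann_sphere S" "None \<in> S"
  obtains z where "r < cmod z" "Some z \<in> S"
proof -
  have "bounded (- {z. Some z \<in> S})"
    using assms by (auto simp: openin_riemann_sphere sphere_open_def intro: compact_imp_bounded)
  then obtain B where B: "\<And>z. Some z \<notin> S \<Longrightarrow> cmod z \<le> B" by (auto simp: bounded_iff)
  define t where "t = \<bar>B\<bar> + \<bar>r\<bar> + 1"
  have t: "0 < t" "r < t" "B < t" by (auto simp: t_def)
  then have norm_t: "cmod (of_real t) = t" by simp
  show thesis
  proof (rule that)
    show "r < cmod (of_real t)" using t norm_t by simp
    show "Some (of_real t) \<in> S" using B[of "of_real t"] t norm_t by fastforce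
  qed
qed

lemma Hausdorff_space_riemann_sphere: "Hausdorff_space riemann_sphere"
proof -
  have Some_None: "\<exists>U V. openin riemann_sphere U \<and> openin riemann_sphere V \<and>
      Some a \<in> U \<and> None \<in> V \<and> disjnt U V" for a
  proof (rule exI[of _ "Some ` ball a 1"], rule exI[of _ "insert None (Some ` (- cball a 1))"],
      intro conjI)
    have "{z. Some z \<in> insert None (Some ` (- cball a 1))} = - cball a 1" by auto
    then show "openin riemann_sphere (insert None (Some ` (- cball a 1)))"
      by (auto simp: openin_riemann_sphere sphere_open_def)
  qed (auto simp: disjnt_def intro: openin_riemann_sphere_Some_image)
  have Some_Some: "\<exists>U V. openin riemann_sphere U \<and> openin riemann_sphere V \<and>
      Some a \<in> U \<and> Some b \<in> V \<and> disjnt U V" if "a \<noteq> b" for a b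
  proof -
    let ?r = "dist a b / 2"
    have "disjnt (ball a ?r) (ball b ?r)"
      unfolding disjnt_def by (rule disjoint_ballI) simp
    then have "disjnt (Some ` ball a ?r) (Some ` ball b ?r)" by (auto simp: disjnt_def)
    moreover have "Some a \<in> Some ` ball a ?r" "Some b \<in> Some ` ball b ?r"
      using that by auto
    ultimately show ?thesis by (meson open_ball openin_riemann_sphere_Some_image)
  qed
  show ?thesis
    unfolding Hausdorff_space_def
    by (metis Some_None Some_Some disjnt_sym option.exhaust)
qed

lemma closedin_riemann_sphere_compact_image:
  assumes "compactin X K" "continuous_map (subtopology X K) riemann_sphere f"
  shows "closedin riemann_sphere (f ` K)"
proof -
  have "compactin riemann_sphere (f ` K)"
    using assms image_compactin compactin_subtopology by blast
  then show ?thesis using Hausdorff_space_riemann_sphere compactin_imp_closedin by blast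
qed

text \<open>The connectedness of the region is used on its finite part \<open>- cball 0 m\<close>; the point at
  infinity is then settled by openness near \<open>None\<close>.\<close>

lemma clopen_in_sphere_exterior_cases:
  fixes M :: ennreal and S C :: "csphere set"
  assumes "M \<noteq> \<infinity>" "openin riemann_sphere S" "closedin riemann_sphere C"
    and agree: "\<And>w. M < smod w \<Longrightarrow> w \<in> S \<longleftrightarrow> w \<in> C"
  shows "{w. M < smod w} \<subseteq> S \<or> {w. M < smod w} \<inter> S = {}"
proof -
  obtain m where m: "M = ennreal m" "m \<ge> 0"
    using assms(1) by (cases M) auto
  define U where "U = - cball (0::complex) m"
  have far_Some: "M < smod (Some z) \<longleftrightarrow> z \<in> U" for z
    using m by (auto simp: U_def smod_def ennreal_less_iff)
  have far_None: "M < smod None"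
    using assms(1) by (simp add: smod_def top.not_eq_extremum)
  define P where "P = U \<inter> {z. Some z \<in> S}"
  have "P = U \<inter> {z. Some z \<in> C}"
    using agree far_Some by (auto simp: P_def)
  then have "closedin (top_of_set U) P"
    using closed_Some_preimage[OF assms(3)] by (simp add: closedin_closed_Int)
  moreover have "openin (top_of_set U) P"
    unfolding P_def using open_Some_preimage[OF assms(2)] by (simp add: openin_open_Int)
  moreover have "connected U"
    unfolding U_def by (intro connected_complement_bounded_convex) auto
  ultimately consider "P = U" | "P = {}"
    using connected_clopen by blast
  then show ?thesis
  proof cases
    case 1
    have "None \<in> C"
    proof (rule ccontr)
      assume "None \<notin> C"
      then have "openin riemann_sphere (- C)" "None \<in> - C"
        using assms(3) by (auto simp: closedin_def topspace_riemann_sphere Compl_eq_Diff_UNIV)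
      then obtain z where z: "m < cmod z" "Some z \<notin> C"
        using openin_riemann_sphere_None_large by blast
      then have "z \<in> P" using 1 by (simp add: U_def)
      then show False
        using z agree far_Some by (auto simp: P_def)
    qed
    then have "None \<in> S" using agree far_None by blast
    moreover have "Some z \<in> S" if "M < smod (Some z)" for z
      using 1 that far_Some by (auto simp: P_def)
    ultimately have "{w. M < smod w} \<subseteq> S"
      by (metis mem_Collect_eq option.exhaust subsetI)
    then show ?thesis ..
  next
    case 2
    have "None \<notin> S"
    proof
      assume "None \<in> S"
      then obtain z where "m < cmod z" "Some z \<in> S"
        using assms(2) openin_riemann_sphere_None_large by blast
      then have "z \<in> P" by (simp add: P_def U_def)
      with 2 show False by simp
    qed
    moreover have "Some z \<notin> S" if "M < smod (Some z)" for z
      using 2 that far_Some by (auto simp: P_def)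
    ultimately have "{w. M < smod w} \<inter> S = {}"
      by (metis disjoint_iff mem_Collect_eq option.exhaust)
    then show ?thesis ..
  qed
qed

theorem mainTheorem7:
  fixes X :: "'a topology" and D :: "'a set" and f :: "'a \<Rightarrow> csphere"
    and M :: ennreal
  assumes "compact_space X"
    and "D \<subseteq> topspace X"
    and "continuous_map (subtopology X (X closure_of D)) riemann_sphere f"
    and "openin riemann_sphere (f ` D)"
    and "M = (SUP z \<in> (X closure_of D) - D. smod (f z))"
  shows "UNIV - {w. smod w \<le> M} \<subseteq> f ` D \<or> f ` (X closure_of D) \<subseteq> {w. smod w \<le> M}"
proof (cases "M = \<infinity>")
  case False
  let ?K = "X closure_of D"
  have boundary: "x \<in> ?K - D \<Longrightarrow> smod (f x) \<le> M" for x
    unfolding assms(5) by (rule SUP_upper)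
  have "compactin X ?K"
    using closedin_compact_space[OF assms(1)] closedin_closure_of by blast
  then have "closedin riemann_sphere (f ` ?K)"
    using assms(3) closedin_riemann_sphere_compact_image by blast
  moreover have "D \<subseteq> ?K"
    using assms(2) closure_of_subset by blast
  then have agree: "M < smod w \<Longrightarrow> w \<in> f ` D \<longleftrightarrow> w \<in> f ` ?K" for w
    using boundary by (force simp: not_le[symmetric])
  ultimately have "{w. M < smod w} \<subseteq> f ` D \<or> {w. M < smod w} \<inter> f ` D = {}"
    using clopen_in_sphere_exterior_cases[OF False assms(4)] by blast
  then show ?thesis
    using agree by (auto simp: not_le)
qed simp

end
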